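(* Let $F_1,\dots,F_n:\mathbb{R}^d\to\mathbb{R}^d$ with each $F_i$ $L_i$-Lipschitz, $F=\frac1n\sum_iF_i$ monotone and $L$-Lipschitz, and $z_*$ with $F(z_* )=0$. If SEG-RR is run with extrapolation step size $\gamma_2\le\frac1L$ and update step size $\gamma_1>0$, then for every epoch $k$, with $\hat z_0^k=z_0^k-\gamma_2F(z_0^k)$, $$\|z_0^k-z_*-\gamma_1nF(\hat z_0^k)\|^2\le(1+4\gamma_1^2n^2L^2)\|z_0^k-z_*\|^2-\gamma_1\gamma_2n(1-\gamma_2^2L^2)\|F(z_0^k)\|^2.$$
   Context: $F$ monotone: $\langle F(z_1)-F(z_2),z_1-z_2\rangle\ge0$. SEG-RR with step sizes $\gamma_1,\gamma_2$: for each epoch $k$ draw a permutation $\pi^k$ of $\{1,\dots,n\}$ uniformly at random; for $i=0,\dots,n-1$ set $\bar z_i^k=z_i^k-\gamma_2F_{\pi_i^k}(z_i^k)$, $z_{i+1}^k=z_i^k-\gamma_1F_{\pi_i^k}(\bar z_i^k)$; then $z_0^{k+1}=z_n^k$. *)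

theory Defs
  imports "HOL-Analysis.Analysis" "HOL-Combinatorics.Permutations"
begin

text \<open>Inner loop of one SEG-RR epoch: components Fc 0..n-1, permutation p of {0..<n}.
  seg_inner Fc g1 g2 p z i is z_i^k when z = z_0^k.\<close>
fun seg_inner :: "(nat \<Rightarrow> 'a::real_normed_vector \<Rightarrow> 'a) \<Rightarrow> real \<Rightarrow> real \<Rightarrow> (nat \<Rightarrow> nat) \<Rightarrow> 'a \<Rightarrow> nat \<Rightarrow> 'a" where
  "seg_inner Fc g1 g2 p z 0 = z"
| "seg_inner Fc g1 g2 p z (Suc i) =
     (let w = seg_inner Fc g1 g2 p z i;
          wb = w - g2 *\<^sub>R Fc (p i) w
      in w - g1 *\<^sub>R Fc (p i) wb)"

fun seg_rr :: "(nat \<Rightarrow> 'a::real_normed_vector \<Rightarrow> 'a) \<Rightarrow> real \<Rightarrow> real \<Rightarrow> nat \<Rightarrow> (nat \<Rightarrow> nat \<Rightarrow> nat) \<Rightarrow> 'a \<Rightarrow> nat \<Rightarrow> 'a" where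
  "seg_rr Fc g1 g2 n P z0 0 = z0"
| "seg_rr Fc g1 g2 n P z0 (Suc k) = seg_inner Fc g1 g2 (P k) (seg_rr Fc g1 g2 n P z0 k) n"

end

theory Submission
  imports Defs
begin

text \<open>Only the monotonicity and Lipschitz continuity of the averaged operator \<open>F\<close> matter:
  the estimate holds for one extragradient step \<open>z \<mapsto> z - a F z'\<close>, \<open>z' = z - \<gamma> F z\<close>, from
  any point \<open>z\<close>, so the SEG-RR iterate \<open>z\<^sub>0\<^sup>k\<close> may be taken arbitrary. Expanding the square,
  the cross term \<open>\<langle>z - z\<^sub>*, F z'\<rangle>\<close> splits into \<open>\<langle>z' - z\<^sub>*, F z'\<rangle> \<ge> 0\<close> (monotonicity) plus
  \<open>\<gamma>\<langle>F z, F z'\<rangle>\<close>, which by polarization and \<open>\<parallel>F z - F z'\<parallel> \<le> \<gamma>L\<parallel>F z\<parallel>\<close> is at least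
  \<open>\<gamma>(1 - \<gamma>\<^sup>2L\<^sup>2)\<parallel>F z\<parallel>\<^sup>2/2\<close>; the quadratic term is bounded via \<open>\<parallel>F z'\<parallel> \<le> 2L\<parallel>z - z\<^sub>*\<parallel>\<close>.\<close>

lemma lipschitz_on_UNIV_norm_diff_le:
  assumes "L-lipschitz_on UNIV F"
  shows "norm (F x - F y) \<le> L * norm (x - y)"
  using lipschitz_onD[OF assms] by (simp add: dist_norm)

lemma extrapolation_norm_diff_le:
  assumes lip: "L-lipschitz_on UNIV F" and "0 \<le> \<gamma>"
  shows "norm (F (z - \<gamma> *\<^sub>R F z) - F z) \<le> \<gamma> * L * norm (F z)"
  using lipschitz_on_UNIV_norm_diff_le[OF lip, of "z - \<gamma> *\<^sub>R F z" z] assms(2)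
  by (simp add: mult_ac)

lemma extrapolation_norm_le:
  assumes lip: "L-lipschitz_on UNIV F" and zero: "F zs = 0"
    and "0 \<le> \<gamma>" and "\<gamma> * L \<le> 1"
  shows "norm (F (z - \<gamma> *\<^sub>R F z)) \<le> 2 * L * norm (z - zs)"
proof -
  have L_nonneg: "0 \<le> L" using lipschitz_on_nonneg[OF lip] by simp
  have Fz: "norm (F z) \<le> L * norm (z - zs)"
    using lipschitz_on_UNIV_norm_diff_le[OF lip, of z zs] zero by simp
  have "norm (z - \<gamma> *\<^sub>R F z - zs) \<le> norm (z - zs) + \<gamma> * norm (F z)"
    using norm_triangle_ineq4[of "z - zs" "\<gamma> *\<^sub>R F z"] \<open>0 \<le> \<gamma>\<close> by (simp add: algebra_simps)
  also have "\<dots> \<le> norm (z - zs) + (\<gamma> * L) * norm (z - zs)"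
    using mult_left_mono[OF Fz \<open>0 \<le> \<gamma>\<close>] by (simp add: mult_ac)
  also have "\<dots> \<le> 2 * norm (z - zs)"
    using mult_right_mono[OF \<open>\<gamma> * L \<le> 1\<close> norm_ge_zero[of "z - zs"]] by simp
  finally have "norm (z - \<gamma> *\<^sub>R F z - zs) \<le> 2 * norm (z - zs)" .
  then have "L * norm (z - \<gamma> *\<^sub>R F z - zs) \<le> L * (2 * norm (z - zs))"
    using L_nonneg by (rule mult_left_mono)
  then show ?thesis
    using lipschitz_on_UNIV_norm_diff_le[OF lip, of "z - \<gamma> *\<^sub>R F z" zs] zero by simp
qed

lemma extragradient_inner_lower_bound:
  fixes F :: "'a::real_inner \<Rightarrow> 'a"
  assumes mono: "\<forall>z1 z2. inner (F z1 - F z2) (z1 - z2) \<ge> 0"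
    and lip: "L-lipschitz_on UNIV F" and zero: "F zs = 0" and "0 \<le> \<gamma>"
  shows "\<gamma> * (1 - \<gamma>\<^sup>2 * L\<^sup>2) * (norm (F z))\<^sup>2
    \<le> 2 * inner (z - zs) (F (z - \<gamma> *\<^sub>R F z))"
proof -
  define zh where "zh = z - \<gamma> *\<^sub>R F z"
  have split: "inner (z - zs) (F zh) = inner (zh - zs) (F zh) + \<gamma> * inner (F z) (F zh)"
    by (simp add: zh_def inner_diff_left)
  have "0 \<le> inner (zh - zs) (F zh)"
    using mono zero by (metis diff_zero inner_commute)
  have "norm (F z - F zh) \<le> \<gamma> * L * norm (F z)"
    using extrapolation_norm_diff_le[OF lip \<open>0 \<le> \<gamma>\<close>] by (simp add: zh_def norm_minus_commute)
  then have "(norm (F z - F zh))\<^sup>2 \<le> \<gamma>\<^sup>2 * L\<^sup>2 * (norm (F z))\<^sup>2"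
    using power_mono[of _ _ 2] by (fastforce simp: power_mult_distrib)
  then have "(1 - \<gamma>\<^sup>2 * L\<^sup>2) * (norm (F z))\<^sup>2 \<le> 2 * inner (F z) (F zh)"
    unfolding dot_norm_neg[of "F z"]
    by (simp add: algebra_simps) (use zero_le_power2[of "norm (F zh)"] in linarith)
  then have "\<gamma> * ((1 - \<gamma>\<^sup>2 * L\<^sup>2) * (norm (F z))\<^sup>2) \<le> \<gamma> * (2 * inner (F z) (F zh))"
    using \<open>0 \<le> \<gamma>\<close> by (rule mult_left_mono)
  with \<open>0 \<le> inner (zh - zs) (F zh)\<close> show ?thesis
    unfolding zh_def[symmetric] split by (simp add: algebra_simps)
qed

lemma extragradient_step_bound:
  fixes F :: "'a::real_inner \<Rightarrow> 'a"
  assumes mono: "\<forall>z1 z2. inner (F z1 - F z2) (z1 - z2) \<ge> 0"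
    and lip: "L-lipschitz_on UNIV F" and zero: "F zs = 0"
    and "0 \<le> \<gamma>" and "\<gamma> * L \<le> 1" and "0 \<le> a"
  shows "(norm (z - zs - a *\<^sub>R F (z - \<gamma> *\<^sub>R F z)))\<^sup>2
    \<le> (1 + 4 * a\<^sup>2 * L\<^sup>2) * (norm (z - zs))\<^sup>2 - a * \<gamma> * (1 - \<gamma>\<^sup>2 * L\<^sup>2) * (norm (F z))\<^sup>2"
proof -
  define u where "u = z - zs"
  define y where "y = F (z - \<gamma> *\<^sub>R F z)"
  have expand: "(norm (u - a *\<^sub>R y))\<^sup>2 = (norm u)\<^sup>2 - a * (2 * inner u y) + a\<^sup>2 * (norm y)\<^sup>2"
    using dot_norm_neg[of u "a *\<^sub>R y"] by (simp add: power_mult_distrib)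
  have "a * (\<gamma> * (1 - \<gamma>\<^sup>2 * L\<^sup>2) * (norm (F z))\<^sup>2) \<le> a * (2 * inner u y)"
    using extragradient_inner_lower_bound[OF mono lip zero \<open>0 \<le> \<gamma>\<close>, of z] \<open>0 \<le> a\<close>
    unfolding u_def y_def by (rule mult_left_mono)
  moreover have "(norm y)\<^sup>2 \<le> (2 * L * norm u)\<^sup>2"
    using extrapolation_norm_le[OF lip zero \<open>0 \<le> \<gamma>\<close> \<open>\<gamma> * L \<le> 1\<close>, of z]
    unfolding u_def y_def by (rule power_mono) simp
  then have "a\<^sup>2 * (norm y)\<^sup>2 \<le> a\<^sup>2 * (4 * L\<^sup>2 * (norm u)\<^sup>2)"
    by (intro mult_left_mono) (simp_all add: power_mult_distrib)
  ultimately show ?thesis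
    unfolding u_def[symmetric] y_def[symmetric] expand by (simp add: algebra_simps)
qed

theorem lemma8:
  fixes Fc :: "nat \<Rightarrow> 'a::euclidean_space \<Rightarrow> 'a"
    and F :: "'a \<Rightarrow> 'a"
    and Li :: "nat \<Rightarrow> real"
    and L \<gamma>1 \<gamma>2 :: real
    and n :: nat
    and P :: "nat \<Rightarrow> nat \<Rightarrow> nat"
    and z0 zs :: 'a
    and k :: nat
  assumes n_pos: "n \<ge> 1"
    and Fc_lip: "\<forall>i<n. (Li i)-lipschitz_on UNIV (Fc i)"
    and F_def: "F = (\<lambda>z. (1 / real n) *\<^sub>R (\<Sum>i<n. Fc i z))"
    and F_mono: "\<forall>z1 z2. inner (F z1 - F z2) (z1 - z2) \<ge> 0"
    and F_lip: "L-lipschitz_on UNIV F"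
    and L_pos: "L > 0"
    and zs_sol: "F zs = 0"
    and perms: "\<forall>j. P j permutes {0..<n}"
    and g2_pos: "\<gamma>2 > 0"
    and g2_le: "\<gamma>2 \<le> 1 / L"
    and g1_pos: "\<gamma>1 > 0"
  shows "let z = seg_rr Fc \<gamma>1 \<gamma>2 n P z0 k;
             zh = z - \<gamma>2 *\<^sub>R F z
         in (norm (z - zs - (\<gamma>1 * real n) *\<^sub>R F zh))\<^sup>2
            \<le> (1 + 4 * \<gamma>1\<^sup>2 * (real n)\<^sup>2 * L\<^sup>2) * (norm (z - zs))\<^sup>2
              - \<gamma>1 * \<gamma>2 * real n * (1 - \<gamma>2\<^sup>2 * L\<^sup>2) * (norm (F z))\<^sup>2"
proof -
  have "\<gamma>2 * L \<le> 1" using g2_le L_pos by (simp add: field_simps)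
  moreover have "0 \<le> \<gamma>1 * real n" using g1_pos by simp
  ultimately show ?thesis
    using extragradient_step_bound[OF F_mono F_lip zs_sol less_imp_le[OF g2_pos],
        of "\<gamma>1 * real n" "seg_rr Fc \<gamma>1 \<gamma>2 n P z0 k"]
    by (simp add: Let_def power_mult_distrib mult_ac)
qed

end
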